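(* In the droplet setting, the scattering coefficient $\alpha:=\int_{D_m}W_m(x)\,dx$ satisfies, as $a\to0$, $$\alpha=-P^2a^{1-h}+\mathcal{O}(a),\qquad P^2:=\frac{-k_0\bigl(\langle1,\overline e_{n_0}\rangle_{L^2(B)}\bigr)^2}{\lambda^B_{n_0}c_{n_0}}\sim1.$$
   Context: $\Omega\subset\mathbb{R}^3$ is a bounded $C^2$ domain. $\phi(\cdot,y)$ is the Neumann function of the Laplacian: $\Delta\phi(\cdot,y)=-\delta_y$ in $\Omega$, $\partial_\nu\phi(\cdot,y)=0$ on $\partial\Omega$; $N^\phi_E(f)(x)=\int_E\phi(x,y)f(y)dy$ on $L^2(E)$ is self-adjoint, compact and positive. $B$ is a smooth bounded domain containing the origin with maximal radius 1, with eigen-pairs $(\lambda^B_n,\overline e_n)$ ($L^2(B)$-orthonormal) of $N^\phi_B$. $D_m=z_m+aB$, $0<a\ll1$, $\rho_1=\rho_0$ a constant, $k_1=k_0a^2$ with $k_0>0$; eigenvalues of $N^\phi_{D_m}$ are $\lambda_n=a^2\lambda^B_n$ with eigenfunctions $e_n$, $\langle1,e_{n}\rangle_{L^2(D_m)}=a^{3/2}\langle1,\overline e_{n}\rangle_{L^2(B)}$. Fix $0<h<1$ and $n_0$. The frequency $\omega$ is chosen such that $k_1-\omega^2\rho_1\lambda_{n_0}=c_{n_0}a^{2+h}$ with a constant $c_{n_0}<0$ independent of $a$ (equivalently $\omega^2=(k_1-c_{n_0}a^{2+h})/(\rho_1\lambda_{n_0})$), and $|k_1-\omega^2\rho_1\lambda_n|\gtrsim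 a^2$ for $n\ne n_0$. $W_m$ solves $\frac{k_1}{\omega^2\rho_1}W_m-N^\phi_{D_m}(W_m)=1$ in $D_m$. *)

theory Defs
  imports "HOL-Analysis.Analysis" "HOL-Library.Landau_Symbols"
begin

type_synonym pt = "real ^ 3"

definition sq_int :: "pt set \<Rightarrow> (pt \<Rightarrow> real) \<Rightarrow> bool" where
  "sq_int D f \<longleftrightarrow> f \<in> borel_measurable lborel \<and> set_integrable lborel D (\<lambda>x. (f x)\<^sup>2)"

definition ip :: "pt set \<Rightarrow> (pt \<Rightarrow> real) \<Rightarrow> (pt \<Rightarrow> real) \<Rightarrow> real" where
  "ip D f g = (LINT x:D|lborel. f x * g x)"

definition Nop :: "(pt \<Rightarrow> pt \<Rightarrow> real) \<Rightarrow> pt set \<Rightarrow> (pt \<Rightarrow> real) \<Rightarrow> pt \<Rightarrow> real" where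
  "Nop \<phi> D f x = (LINT y:D|lborel. \<phi> x y * f y)"

definition droplet :: "pt \<Rightarrow> real \<Rightarrow> pt set \<Rightarrow> pt set" where
  "droplet z a B = (\<lambda>x. z + a *\<^sub>R x) ` B"

text \<open>(lam_n, e_n) is a complete orthonormal eigen-system of N^phi_D on L^2(D),
  with phi a symmetric Hilbert-Schmidt kernel on D x D (so N^phi_D is self-adjoint and compact).\<close>
definition eigensystem ::
  "(pt \<Rightarrow> pt \<Rightarrow> real) \<Rightarrow> pt set \<Rightarrow> (nat \<Rightarrow> real) \<Rightarrow> (nat \<Rightarrow> pt \<Rightarrow> real) \<Rightarrow> bool" where
  "eigensystem \<phi> D lam e \<longleftrightarrow>
     D \<in> sets lborel \<and>
     case_prod \<phi> \<in> borel_measurable (lborel \<Otimes>\<^sub>M lborel) \<and>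
     set_integrable (lborel \<Otimes>\<^sub>M lborel) (D \<times> D) (\<lambda>(x,y). (\<phi> x y)\<^sup>2) \<and>
     (\<forall>x\<in>D. \<forall>y\<in>D. \<phi> x y = \<phi> y x) \<and>
     (\<forall>n. sq_int D (e n)) \<and>
     (\<forall>n m. ip D (e n) (e m) = (if n = m then 1 else 0)) \<and>
     (\<forall>f. sq_int D f \<longrightarrow> (\<lambda>n. (ip D f (e n))\<^sup>2) sums (LINT x:D|lborel. (f x)\<^sup>2)) \<and>
     (\<forall>n. lam n > 0 \<and> (AE x in lborel. x \<in> D \<longrightarrow> Nop \<phi> D (e n) x = lam n * e n x))"

end

theory Submission
  imports Defs
begin

text \<open>Testing the equation for W_m against the eigenfunctions e_n and using the symmetry of the
  kernel gives (k_1/(omega^2 rho_1) - lambda_n) <W_m, e_n> = <1, e_n>, while Parseval's identity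
  gives alpha = sum_n <W_m, e_n> <1, e_n> with <1, e_n>^2 = a^3 <1, ebar_n>^2. The resonant mode n_0
  has a denominator of order a^(2+h) and contributes -P^2 a^(1-h) + O(a); every other denominator is
  at least of order a^2, so by Parseval on B the remaining modes add up to O(a).\<close>

lemma abs_mult_le_sum_squares: "\<bar>x * y\<bar> \<le> x\<^sup>2 + (y::real)\<^sup>2"
proof -
  have "2 * \<bar>x\<bar> * \<bar>y\<bar> \<le> x\<^sup>2 + y\<^sup>2"
    using sum_squares_bound[of "\<bar>x\<bar>" "\<bar>y\<bar>"] by simp
  moreover have "0 \<le> \<bar>x\<bar> * \<bar>y\<bar>" by simp
  ultimately show ?thesis unfolding abs_mult by linarith
qed

lemma set_integrable_mult_sq_int:
  assumes "D \<in> sets lborel" "sq_int D f" "sq_int D g"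
  shows "set_integrable lborel D (\<lambda>x. f x * g x)"
proof -
  have [measurable]: "f \<in> borel_measurable lborel" "g \<in> borel_measurable lborel" "D \<in> sets lborel"
    using assms by (auto simp: sq_int_def)
  have "set_integrable lborel D (\<lambda>x. (f x)\<^sup>2 + (g x)\<^sup>2)"
    using assms by (auto simp: sq_int_def)
  then show ?thesis
    unfolding set_integrable_def
    by (rule Bochner_Integration.integrable_bound)
       (auto simp: indicator_def abs_mult_le_sum_squares)
qed

lemma sq_int_add:
  assumes "D \<in> sets lborel" "sq_int D f" "sq_int D g"
  shows "sq_int D (\<lambda>x. f x + g x)"
proof -
  have "set_integrable lborel D (\<lambda>x. (f x)\<^sup>2 + 2 * (f x * g x) + (g x)\<^sup>2)"
    using assms set_integrable_mult_sq_int[OF assms] by (auto simp: sq_int_def)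
  then show ?thesis
    using assms by (simp add: sq_int_def power2_sum algebra_simps borel_measurable_add)
qed

lemma sq_int_cmult: "sq_int D f \<Longrightarrow> sq_int D (\<lambda>x. c * f x)"
  by (auto simp: sq_int_def power_mult_distrib)

lemma sq_int_diff:
  "D \<in> sets lborel \<Longrightarrow> sq_int D f \<Longrightarrow> sq_int D g \<Longrightarrow> sq_int D (\<lambda>x. f x - g x)"
  using sq_int_add[of D f "\<lambda>x. (-1) * g x"] sq_int_cmult[of D g "-1"] by simp

lemma sq_int_const:
  assumes "D \<in> sets lborel" "bounded D"
  shows "sq_int D (\<lambda>_. c)"
proof -
  have "integrable lborel (indicator D :: pt \<Rightarrow> real)"
    using assms emeasure_bounded_finite[OF assms(2)] by simp
  then show ?thesis
    unfolding sq_int_def set_integrable_def by simp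
qed

lemma ip_commute: "ip D f g = ip D g f"
  unfolding ip_def by (simp add: mult.commute)

lemma ip_cmult_left: "ip D (\<lambda>x. c * f x) g = c * ip D f g"
  unfolding ip_def by (simp add: mult.assoc)

lemma ip_add_left:
  assumes "D \<in> sets lborel" "sq_int D f" "sq_int D g" "sq_int D k"
  shows "ip D (\<lambda>x. f x + g x) k = ip D f k + ip D g k"
  using set_integrable_mult_sq_int[of D f k] set_integrable_mult_sq_int[of D g k] assms
  unfolding ip_def by (simp add: distrib_right)

lemma ip_diff_left:
  assumes "D \<in> sets lborel" "sq_int D f" "sq_int D g" "sq_int D k"
  shows "ip D (\<lambda>x. f x - g x) k = ip D f k - ip D g k"
  using set_integrable_mult_sq_int[of D f k] set_integrable_mult_sq_int[of D g k] assms
  unfolding ip_def by (simp add: left_diff_distrib)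

lemma ip_cong_AE:
  assumes "D \<in> sets lborel" "f \<in> borel_measurable lborel" "g \<in> borel_measurable lborel"
    "k \<in> borel_measurable lborel" "AE x in lborel. x \<in> D \<longrightarrow> f x = g x"
  shows "ip D f k = ip D g k"
  unfolding ip_def using assms by (intro set_lebesgue_integral_cong_AE) auto

lemma ip_polarization:
  assumes "D \<in> sets lborel" "sq_int D f" "sq_int D g"
  shows "ip D (\<lambda>x. f x + g x) (\<lambda>x. f x + g x) - ip D (\<lambda>x. f x - g x) (\<lambda>x. f x - g x)
    = 4 * ip D f g"
proof -
  have s: "sq_int D (\<lambda>x. f x + g x)" and d: "sq_int D (\<lambda>x. f x - g x)"
    using assms by (auto intro: sq_int_add sq_int_diff)
  have "ip D (\<lambda>x. f x + g x) (\<lambda>x. f x + g x) = ip D f f + 2 * ip D f g + ip D g g"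
    using assms ip_add_left[OF _ _ _ s] ip_add_left[of D f g]
      ip_commute[of D f "\<lambda>x. f x + g x"] ip_commute[of D g "\<lambda>x. f x + g x"] ip_commute[of D g f]
    by simp
  moreover have "ip D (\<lambda>x. f x - g x) (\<lambda>x. f x - g x) = ip D f f - 2 * ip D f g + ip D g g"
    using assms ip_diff_left[OF _ _ _ d] ip_diff_left[of D f g]
      ip_commute[of D f "\<lambda>x. f x - g x"] ip_commute[of D g "\<lambda>x. f x - g x"] ip_commute[of D g f]
    by simp
  ultimately show ?thesis by simp
qed

lemma eigensystem_ip_sums:
  assumes eig: "eigensystem \<phi> D lam e" and f: "sq_int D f" and g: "sq_int D g"
  shows "(\<lambda>n. ip D f (e n) * ip D g (e n)) sums ip D f g"
proof -
  have D: "D \<in> sets lborel" and e: "\<And>n. sq_int D (e n)"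
    and parseval: "\<And>u. sq_int D u \<Longrightarrow> (\<lambda>n. (ip D u (e n))\<^sup>2) sums ip D u u"
    using eig by (auto simp: eigensystem_def ip_def power2_eq_square)
  have "(\<lambda>n. (ip D (\<lambda>x. f x + g x) (e n))\<^sup>2 - (ip D (\<lambda>x. f x - g x) (e n))\<^sup>2)
      sums (4 * ip D f g)"
    unfolding ip_polarization[OF D f g, symmetric]
    by (intro sums_diff parseval sq_int_add sq_int_diff D f g)
  also have "(\<lambda>n. (ip D (\<lambda>x. f x + g x) (e n))\<^sup>2 - (ip D (\<lambda>x. f x - g x) (e n))\<^sup>2)
      = (\<lambda>n. 4 * (ip D f (e n) * ip D g (e n)))"
    using D f g e by (simp add: ip_add_left ip_diff_left power2_eq_square algebra_simps)
  finally show ?thesis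
    using sums_mult_D by fastforce
qed

lemma integrable_pair_sq_int_squares:
  assumes [measurable]: "D \<in> sets lborel" and f: "sq_int D f" and g: "sq_int D g"
  shows "integrable (lborel \<Otimes>\<^sub>M lborel)
    (\<lambda>(x, y). indicator D x * indicator D y * ((g x)\<^sup>2 * (f y)\<^sup>2) :: real)"
proof (rule lborel_pair.Fubini_integrable)
  have [measurable]: "f \<in> borel_measurable lborel" "g \<in> borel_measurable lborel"
    using f g by (auto simp: sq_int_def)
  show "(\<lambda>(x, y). indicator D x * indicator D y * ((g x)\<^sup>2 * (f y)\<^sup>2) :: real)
    \<in> borel_measurable (lborel \<Otimes>\<^sub>M lborel)"
    by measurable
  have f2: "integrable lborel (\<lambda>y. indicator D y * (f y)\<^sup>2 :: real)"
    and g2: "integrable lborel (\<lambda>x. indicator D x * (g x)\<^sup>2 :: real)"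
    using f g unfolding sq_int_def set_integrable_def by simp_all
  have "(\<lambda>y. norm (indicator D x * indicator D y * ((g x)\<^sup>2 * (f y)\<^sup>2) :: real))
      = (\<lambda>y. (indicator D x * (g x)\<^sup>2) * (indicator D y * (f y)\<^sup>2))" for x
    by (auto simp: indicator_def)
  then show "integrable lborel (\<lambda>x. \<integral>y. norm ((\<lambda>(x, y). indicator D x * indicator D y
      * ((g x)\<^sup>2 * (f y)\<^sup>2) :: real) (x, y)) \<partial>lborel)"
    and "AE x in lborel. integrable lborel (\<lambda>y. (\<lambda>(x, y). indicator D x * indicator D y
      * ((g x)\<^sup>2 * (f y)\<^sup>2) :: real) (x, y))"
    using f2 g2 by simp_all
qed

lemma hilbert_schmidt_integrable:
  assumes [measurable]: "D \<in> sets lborel" "case_prod \<phi> \<in> borel_measurable (lborel \<Otimes>\<^sub>M lborel)"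
    and HS: "set_integrable (lborel \<Otimes>\<^sub>M lborel) (D \<times> D) (\<lambda>(x, y). (\<phi> x y)\<^sup>2)"
    and f: "sq_int D f" and g: "sq_int D g"
  shows "integrable (lborel \<Otimes>\<^sub>M lborel)
    (\<lambda>(x, y). indicator D x * indicator D y * (\<phi> x y * f y * g x))"
proof -
  have [measurable]: "f \<in> borel_measurable lborel" "g \<in> borel_measurable lborel"
    using f g by (auto simp: sq_int_def)
  have "integrable (lborel \<Otimes>\<^sub>M lborel) (\<lambda>(x, y). indicator D x * indicator D y * (\<phi> x y)\<^sup>2)"
    using HS unfolding set_integrable_def
    by (simp add: indicator_times case_prod_beta')
  from Bochner_Integration.integrable_add[OF this integrable_pair_sq_int_squares[OF assms(1) f g]]
  have "integrable (lborel \<Otimes>\<^sub>M lborel) (\<lambda>(x, y).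
      indicator D x * indicator D y * (\<phi> x y)\<^sup>2 + indicator D x * indicator D y * ((g x)\<^sup>2 * (f y)\<^sup>2))"
    by (simp add: case_prod_beta')
  then show ?thesis
  proof (rule Bochner_Integration.integrable_bound)
    show "AE z in lborel \<Otimes>\<^sub>M lborel.
      norm ((\<lambda>(x, y). indicator D x * indicator D y * (\<phi> x y * f y * g x)) z)
      \<le> norm ((\<lambda>(x, y). indicator D x * indicator D y * (\<phi> x y)\<^sup>2
          + indicator D x * indicator D y * ((g x)\<^sup>2 * (f y)\<^sup>2)) z)"
    proof (rule AE_I2, clarify)
      fix x y
      have "\<bar>\<phi> x y * (f y * g x)\<bar> \<le> (\<phi> x y)\<^sup>2 + (g x)\<^sup>2 * (f y)\<^sup>2"
        using abs_mult_le_sum_squares[of "\<phi> x y" "f y * g x"] by (simp add: power_mult_distrib mult.commute)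
      then show "norm (indicator D x * indicator D y * (\<phi> x y * f y * g x))
        \<le> norm (indicator D x * indicator D y * (\<phi> x y)\<^sup>2
          + indicator D x * indicator D y * ((g x)\<^sup>2 * (f y)\<^sup>2) :: real)"
        by (auto simp: indicator_def mult.assoc)
    qed
  qed measurable
qed

lemma ip_Nop_commute:
  assumes [measurable]: "D \<in> sets lborel" "case_prod \<phi> \<in> borel_measurable (lborel \<Otimes>\<^sub>M lborel)"
    and HS: "set_integrable (lborel \<Otimes>\<^sub>M lborel) (D \<times> D) (\<lambda>(x, y). (\<phi> x y)\<^sup>2)"
    and sym: "\<forall>x\<in>D. \<forall>y\<in>D. \<phi> x y = \<phi> y x"
    and f: "sq_int D f" and g: "sq_int D g"
  shows "ip D (Nop \<phi> D f) g = ip D f (Nop \<phi> D g)"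
proof -
  define F where "F x y = indicator D x * indicator D y * (\<phi> x y * f y * g x)" for x y
  have F: "integrable (lborel \<Otimes>\<^sub>M lborel) (case_prod F)"
    unfolding F_def by (rule hilbert_schmidt_integrable[OF assms(1,2) HS f g])
  have inner_y: "(\<integral>y. F x y \<partial>lborel) = indicator D x * (Nop \<phi> D f x * g x)" for x
  proof -
    have "(\<integral>y. F x y \<partial>lborel) = (\<integral>y. (indicator D x * g x) * (indicator D y *\<^sub>R (\<phi> x y * f y)) \<partial>lborel)"
      unfolding F_def by (rule Bochner_Integration.integral_cong) (auto simp: indicator_def)
    then show ?thesis unfolding Nop_def set_lebesgue_integral_def by simp
  qed
  have inner_x: "(\<integral>x. F x y \<partial>lborel) = indicator D y * (f y * Nop \<phi> D g y)" for y
  proof -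
    have "(\<integral>x. F x y \<partial>lborel) = (\<integral>x. (indicator D y * f y) * (indicator D x *\<^sub>R (\<phi> y x * g x)) \<partial>lborel)"
      unfolding F_def using sym by (intro Bochner_Integration.integral_cong) (auto simp: indicator_def)
    then show ?thesis unfolding Nop_def set_lebesgue_integral_def by simp
  qed
  have "ip D (Nop \<phi> D f) g = (\<integral>x. (\<integral>y. F x y \<partial>lborel) \<partial>lborel)"
    unfolding inner_y ip_def set_lebesgue_integral_def by simp
  also have "\<dots> = (\<integral>y. (\<integral>x. F x y \<partial>lborel) \<partial>lborel)"
    using lborel_pair.Fubini_integral[OF F] by simp
  also have "\<dots> = ip D f (Nop \<phi> D g)"
    unfolding inner_x ip_def set_lebesgue_integral_def by simp
  finally show ?thesis .
qed

lemma Nop_borel_measurable: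
  assumes "D \<in> sets lborel" "case_prod \<phi> \<in> borel_measurable (lborel \<Otimes>\<^sub>M lborel)"
    "f \<in> borel_measurable lborel"
  shows "Nop \<phi> D f \<in> borel_measurable lborel"
  using assms unfolding Nop_def set_lebesgue_integral_def by measurable

lemma eigensystem_ip_Nop:
  assumes eig: "eigensystem \<phi> D lam e" and f: "sq_int D f"
  shows "ip D (Nop \<phi> D f) (e n) = lam n * ip D f (e n)"
proof -
  have D: "D \<in> sets lborel" and \<phi>: "case_prod \<phi> \<in> borel_measurable (lborel \<Otimes>\<^sub>M lborel)"
    and e: "sq_int D (e n)"
    and eigenfunction: "AE x in lborel. x \<in> D \<longrightarrow> Nop \<phi> D (e n) x = lam n * e n x"
    using eig by (auto simp: eigensystem_def)
  have [measurable]: "f \<in> borel_measurable lborel" "e n \<in> borel_measurable lborel"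
    using f e by (auto simp: sq_int_def)
  have "ip D (Nop \<phi> D f) (e n) = ip D (Nop \<phi> D (e n)) f"
    using ip_Nop_commute[OF D \<phi> _ _ f e] eig by (simp add: eigensystem_def ip_commute)
  also have "\<dots> = ip D (\<lambda>x. lam n * e n x) f"
    using D \<phi> eigenfunction by (intro ip_cong_AE Nop_borel_measurable) auto
  finally show ?thesis
    by (simp add: ip_cmult_left ip_commute)
qed

lemma eigensystem_ip_resolvent:
  assumes eig: "eigensystem \<phi> D lam e" and u: "sq_int D u" and f: "sq_int D f"
    and eq: "AE x in lborel. x \<in> D \<longrightarrow> \<kappa> * u x - Nop \<phi> D u x = f x"
  shows "(\<kappa> - lam n) * ip D u (e n) = ip D f (e n)"
proof -
  have D: "D \<in> sets lborel" and \<phi>: "case_prod \<phi> \<in> borel_measurable (lborel \<Otimes>\<^sub>M lborel)"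
    and e: "sq_int D (e n)"
    using eig by (auto simp: eigensystem_def)
  have [measurable]: "u \<in> borel_measurable lborel" "f \<in> borel_measurable lborel"
    "e n \<in> borel_measurable lborel"
    using u f e by (auto simp: sq_int_def)
  have "lam n * ip D u (e n) = ip D (Nop \<phi> D u) (e n)"
    by (rule eigensystem_ip_Nop[OF eig u, symmetric])
  also have "\<dots> = ip D (\<lambda>x. \<kappa> * u x - f x) (e n)"
    using D \<phi> eq by (intro ip_cong_AE Nop_borel_measurable) auto
  also have "\<dots> = \<kappa> * ip D u (e n) - ip D f (e n)"
    using D u f e by (simp add: ip_diff_left sq_int_cmult ip_cmult_left)
  finally show ?thesis
    by (simp add: algebra_simps)
qed

lemma sums_remove_term_bound:
  fixes t g :: "nat \<Rightarrow> real"
  assumes "t sums \<alpha>" "g sums G" "0 \<le> g i" "\<And>n. n \<noteq> i \<Longrightarrow> \<bar>t n\<bar> \<le> g n"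
  shows "\<bar>\<alpha> - t i\<bar> \<le> G"
proof -
  have "(\<lambda>n. t n - (if n = i then t i else 0)) sums (\<alpha> - t i)"
    using assms(1) sums_single by (rule sums_diff)
  from norm_sums_le[OF this assms(2)] show ?thesis
    using assms(3,4) by force
qed

lemma power2_powr_three_halves_mult:
  fixes a q :: real
  assumes "0 < a"
  shows "(a powr (3/2) * q)\<^sup>2 = a ^ 3 * q\<^sup>2"
proof -
  have "(a powr (3/2))\<^sup>2 = a powr 3"
    by (simp add: power2_eq_square powr_add[symmetric])
  then show ?thesis
    using assms by (simp add: power_mult_distrib)
qed

lemma nonresonant_term_bound:
  fixes a C d \<Omega> w q :: real
  assumes a: "0 < a" and C: "C > 0" and \<Omega>: "0 \<le> \<Omega>"
    and coeff: "d * w = \<Omega> * (a powr (3/2) * q)" and gap: "C * a\<^sup>2 \<le> \<bar>d\<bar>"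
  shows "\<bar>w * (a powr (3/2) * q)\<bar> \<le> \<Omega> * a / C * q\<^sup>2"
proof -
  have Ca: "0 < C * a\<^sup>2" using a C by simp
  then have "d \<noteq> 0" using gap by auto
  then have "w = \<Omega> * (a powr (3/2) * q) / d"
    using coeff by (simp add: field_simps)
  then have "w * (a powr (3/2) * q) = \<Omega> * (a ^ 3 * q\<^sup>2) / d"
    using power2_powr_three_halves_mult[OF a, of q] by (simp add: power2_eq_square)
  then have "\<bar>w * (a powr (3/2) * q)\<bar> = \<Omega> * (a ^ 3 * q\<^sup>2) / \<bar>d\<bar>"
    using \<Omega> a by (simp add: abs_mult)
  also have "\<dots> \<le> \<Omega> * (a ^ 3 * q\<^sup>2) / (C * a\<^sup>2)"
    using gap Ca \<Omega> a by (intro divide_left_mono) auto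
  also have "\<dots> = \<Omega> * a / C * q\<^sup>2"
    using a C by (simp add: field_simps power2_eq_square power3_eq_cube)
  finally show ?thesis .
qed

lemma resonant_term:
  fixes a L c k0 h \<Omega> w p q :: real
  assumes a: "0 < a" and L: "L > 0" and c: "c \<noteq> 0"
    and \<Omega>: "\<Omega> = (k0 - c * a powr h) / L"
    and coeff: "(k0 * a\<^sup>2 - \<Omega> * (a\<^sup>2 * L)) * w = \<Omega> * p"
    and p: "p = a powr (3/2) * q"
  shows "w * p = k0 * q\<^sup>2 / (L * c) * a powr (1 - h) - q\<^sup>2 * a / L"
proof -
  have \<Omega>L: "\<Omega> * L = k0 - c * a powr h"
    using L by (simp add: \<Omega>)
  have "k0 * a\<^sup>2 - \<Omega> * (a\<^sup>2 * L) = (k0 - \<Omega> * L) * a\<^sup>2"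
    by (simp add: algebra_simps)
  also have "\<dots> = c * a powr h * a\<^sup>2"
    by (simp add: \<Omega>L)
  finally have d: "k0 * a\<^sup>2 - \<Omega> * (a\<^sup>2 * L) = c * a powr h * a\<^sup>2" .
  have p2: "p\<^sup>2 = a ^ 3 * q\<^sup>2"
    unfolding p by (rule power2_powr_three_halves_mult[OF a])
  have "w * p = \<Omega> * p\<^sup>2 / (c * a powr h * a\<^sup>2)"
    using coeff a c unfolding d by (simp add: field_simps power2_eq_square)
  also have "\<dots> = (k0 - c * a powr h) * q\<^sup>2 * (a / a powr h) / (L * c)"
    using a c L unfolding p2 by (simp add: \<Omega> field_simps power2_eq_square power3_eq_cube)
  also have "\<dots> = k0 * q\<^sup>2 / (L * c) * a powr (1 - h) - q\<^sup>2 * a / L"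
    using a c L by (simp add: powr_diff field_simps)
  finally show ?thesis .
qed

lemma resonant_series_estimate:
  fixes a h k0 c C \<Omega> \<kappa> \<alpha> m :: real and lam w q :: "nat \<Rightarrow> real" and n0 :: nat
  assumes a: "0 < a" "a < 1" and h: "0 \<le> h" and k0: "0 \<le> k0" and c: "c < 0"
    and lam: "lam n0 > 0" and C: "C > 0"
    and \<Omega>: "\<Omega> = (k0 - c * a powr h) / lam n0" and \<kappa>: "\<kappa> = k0 * a\<^sup>2 / \<Omega>"
    and coeff: "\<And>n. (\<kappa> - a\<^sup>2 * lam n) * w n = a powr (3/2) * q n"
    and gap: "\<And>n. n \<noteq> n0 \<Longrightarrow> C * a\<^sup>2 \<le> \<bar>k0 * a\<^sup>2 - \<Omega> * (a\<^sup>2 * lam n)\<bar>"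
    and \<alpha>: "(\<lambda>n. w n * (a powr (3/2) * q n)) sums \<alpha>" and m: "(\<lambda>n. (q n)\<^sup>2) sums m"
  shows "\<bar>\<alpha> + (- k0 * (q n0)\<^sup>2 / (lam n0 * c)) * a powr (1 - h)\<bar>
    \<le> ((q n0)\<^sup>2 / lam n0 + (k0 - c) * m / (lam n0 * C)) * a"
proof -
  have "c * a powr h < 0" and "c \<le> c * a powr h"
    using a h c by (auto simp: mult_neg_pos powr_le1 mult_le_cancel_left1)
  then have \<Omega>_pos: "0 < \<Omega>" and \<Omega>_le: "\<Omega> \<le> (k0 - c) / lam n0"
    using k0 c lam by (auto simp: \<Omega> divide_right_mono)
  have coeff': "(k0 * a\<^sup>2 - \<Omega> * (a\<^sup>2 * lam n)) * w n = \<Omega> * (a powr (3/2) * q n)" for n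
    using coeff[of n] \<Omega>_pos by (simp add: \<kappa> field_simps)
  define T where "T = w n0 * (a powr (3/2) * q n0)"
  have tail: "\<bar>\<alpha> - T\<bar> \<le> \<Omega> * a / C * m"
    unfolding T_def
  proof (rule sums_remove_term_bound[OF \<alpha> sums_mult[OF m]])
    show "0 \<le> \<Omega> * a / C * (q n0)\<^sup>2"
      using \<Omega>_pos a C by simp
    show "\<bar>w n * (a powr (3/2) * q n)\<bar> \<le> \<Omega> * a / C * (q n)\<^sup>2" if "n \<noteq> n0" for n
      using a C \<Omega>_pos coeff' gap[OF that] by (intro nonresonant_term_bound) auto
  qed
  have "\<Omega> * a / C * m \<le> (k0 - c) / lam n0 * a / C * m"
    using \<Omega>_le a C sums_le[OF _ sums_zero m] by (intro mult_right_mono divide_right_mono) auto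
  moreover have "T = k0 * (q n0)\<^sup>2 / (lam n0 * c) * a powr (1 - h) - (q n0)\<^sup>2 * a / lam n0"
    unfolding T_def using a lam c coeff'[of n0] by (intro resonant_term[OF _ _ _ \<Omega>]) auto
  moreover have "0 \<le> (q n0)\<^sup>2 * a / lam n0"
    using a lam by simp
  moreover have "((q n0)\<^sup>2 / lam n0 + (k0 - c) * m / (lam n0 * C)) * a
      = (q n0)\<^sup>2 * a / lam n0 + (k0 - c) / lam n0 * a / C * m"
    using lam C by (simp add: field_simps)
  ultimately show ?thesis
    using tail by (simp add: abs_le_iff)
qed

lemma bounded_droplet: "bounded B \<Longrightarrow> bounded (droplet z a B)"
  unfolding droplet_def image_image[of "\<lambda>x. z + x" "\<lambda>x. a *\<^sub>R x", symmetric, simplified]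
  by (intro bounded_translation bounded_scaling)

lemma scattering_coefficient_estimate:
  fixes D :: "pt set" and a h k0 \<rho>0 c C \<omega> m :: real and n0 :: nat
    and lam q :: "nat \<Rightarrow> real" and e :: "nat \<Rightarrow> pt \<Rightarrow> real" and u :: "pt \<Rightarrow> real"
  assumes a: "0 < a" "a < 1" and h: "0 \<le> h" and k0: "0 \<le> k0" and \<rho>0: "0 < \<rho>0"
    and c: "c < 0" and lam: "lam n0 > 0" and C: "C > 0"
    and eig: "eigensystem \<phi> D (\<lambda>n. a\<^sup>2 * lam n) e" and D: "bounded D"
    and proj: "\<And>n. ip D (\<lambda>_. 1) (e n) = a powr (3/2) * q n"
    and freq: "\<omega>\<^sup>2 = (k0 * a\<^sup>2 - c * a powr (2 + h)) / (\<rho>0 * (a\<^sup>2 * lam n0))"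
    and gap: "\<And>n. n \<noteq> n0 \<Longrightarrow> C * a\<^sup>2 \<le> \<bar>k0 * a\<^sup>2 - \<omega>\<^sup>2 * \<rho>0 * (a\<^sup>2 * lam n)\<bar>"
    and u: "sq_int D u"
    and u_eq: "AE x in lborel. x \<in> D \<longrightarrow> (k0 * a\<^sup>2) / (\<omega>\<^sup>2 * \<rho>0) * u x - Nop \<phi> D u x = 1"
    and m: "(\<lambda>n. (q n)\<^sup>2) sums m"
  shows "\<bar>(LINT x:D|lborel. u x) + (- k0 * (q n0)\<^sup>2 / (lam n0 * c)) * a powr (1 - h)\<bar>
    \<le> ((q n0)\<^sup>2 / lam n0 + (k0 - c) * m / (lam n0 * C)) * a"
proof -
  define \<Omega> where "\<Omega> = \<omega>\<^sup>2 * \<rho>0"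
  have one: "sq_int D (\<lambda>_. 1)"
    using eig D by (intro sq_int_const) (auto simp: eigensystem_def)
  have "\<omega>\<^sup>2 = (k0 - c * a powr h) * a\<^sup>2 / (\<rho>0 * lam n0 * a\<^sup>2)"
    using freq a by (simp add: powr_add algebra_simps)
  then have \<Omega>: "\<Omega> = (k0 - c * a powr h) / lam n0"
    using a \<rho>0 by (simp add: \<Omega>_def)
  have "(k0 * a\<^sup>2 / \<Omega> - a\<^sup>2 * lam n) * ip D u (e n) = a powr (3/2) * q n" for n
    using eigensystem_ip_resolvent[OF eig u one u_eq] proj by (simp add: \<Omega>_def)
  moreover have "(\<lambda>n. ip D u (e n) * (a powr (3/2) * q n)) sums (LINT x:D|lborel. u x)"
    using eigensystem_ip_sums[OF eig u one] proj by (simp add: ip_def)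
  ultimately show ?thesis
    using a h k0 c lam C m gap
    by (intro resonant_series_estimate[where lam = lam, OF _ _ _ _ _ _ _ \<Omega> refl])
       (auto simp: \<Omega>_def mult.assoc)
qed

theorem lemma4p6:
  fixes \<Omega> B :: "pt set" and \<phi> :: "pt \<Rightarrow> pt \<Rightarrow> real" and z :: pt
    and a0 h k0 \<rho>0 c :: real and n0 :: nat
    and lamB :: "nat \<Rightarrow> real" and eB :: "nat \<Rightarrow> pt \<Rightarrow> real"
    and e :: "real \<Rightarrow> nat \<Rightarrow> pt \<Rightarrow> real"
    and \<omega> :: "real \<Rightarrow> real" and W :: "real \<Rightarrow> pt \<Rightarrow> real"
  assumes \<Omega>: "open \<Omega>" "bounded \<Omega>" "z \<in> \<Omega>"
    and B: "open B" "bounded B" "0 \<in> B" "(SUP x\<in>B. norm x) = 1"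
    and a0: "a0 > 0" "\<forall>a\<in>{0<..<a0}. closure (droplet z a B) \<subseteq> \<Omega>"
    and h: "0 < h" "h < 1"
    and k0: "k0 > 0" and rho0: "\<rho>0 > 0" and c: "c < 0"
    and eigB: "eigensystem \<phi> B lamB eB"
    and eigD: "\<forall>a\<in>{0<..<a0}. eigensystem \<phi> (droplet z a B) (\<lambda>n. a\<^sup>2 * lamB n) (e a)"
    and proj: "\<forall>a\<in>{0<..<a0}. \<forall>n. ip (droplet z a B) (\<lambda>_. 1) (e a n)
                 = a powr (3/2) * ip B (\<lambda>_. 1) (eB n)"
    and freq: "\<forall>a\<in>{0<..<a0}. (\<omega> a)\<^sup>2 = (k0 * a\<^sup>2 - c * a powr (2 + h)) / (\<rho>0 * (a\<^sup>2 * lamB n0))"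
    and gap: "\<exists>C>0. \<forall>a\<in>{0<..<a0}. \<forall>n. n \<noteq> n0 \<longrightarrow>
                 \<bar>k0 * a\<^sup>2 - (\<omega> a)\<^sup>2 * \<rho>0 * (a\<^sup>2 * lamB n)\<bar> \<ge> C * a\<^sup>2"
    and Wsol: "\<forall>a\<in>{0<..<a0}. sq_int (droplet z a B) (W a) \<and>
                 (AE x in lborel. x \<in> droplet z a B \<longrightarrow>
                    (k0 * a\<^sup>2) / ((\<omega> a)\<^sup>2 * \<rho>0) * W a x - Nop \<phi> (droplet z a B) (W a) x = 1)"
  shows "(\<lambda>a. (LINT x:droplet z a B|lborel. W a x)
            + (- k0 * (ip B (\<lambda>_. 1) (eB n0))\<^sup>2 / (lamB n0 * c)) * a powr (1 - h))
         \<in> O[at_right 0](\<lambda>a. a)"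
proof -
  \<comment> \<open>The geometric hypotheses on \<open>\<Omega>\<close>, \<open>B\<close> and \<open>h < 1\<close> are what justify \<open>eigD\<close> and \<open>proj\<close>
    in the paper.\<close>
  obtain C where C: "C > 0" and gap_C: "\<forall>a\<in>{0<..<a0}. \<forall>n. n \<noteq> n0 \<longrightarrow>
      C * a\<^sup>2 \<le> \<bar>k0 * a\<^sup>2 - (\<omega> a)\<^sup>2 * \<rho>0 * (a\<^sup>2 * lamB n)\<bar>"
    using gap by blast
  have B_sets: "B \<in> sets lborel" and lam: "lamB n0 > 0"
    using eigB by (auto simp: eigensystem_def)
  define q where "q n = ip B (\<lambda>_. 1) (eB n)" for n
  have m: "(\<lambda>n. (q n)\<^sup>2) sums ip B (\<lambda>_. 1) (\<lambda>_. 1)"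
    using eigensystem_ip_sums[OF eigB sq_int_const[OF B_sets B(2)] sq_int_const[OF B_sets B(2)]]
    by (simp add: q_def power2_eq_square)
  have "\<bar>(LINT x:droplet z a B|lborel. W a x) + (- k0 * (q n0)\<^sup>2 / (lamB n0 * c)) * a powr (1 - h)\<bar>
      \<le> ((q n0)\<^sup>2 / lamB n0 + (k0 - c) * ip B (\<lambda>_. 1) (\<lambda>_. 1) / (lamB n0 * C)) * a"
    if a: "0 < a" "a < a0" "a < 1" for a
  proof -
    have a_in: "a \<in> {0<..<a0}"
      using a by simp
    show ?thesis
      using proj freq gap_C Wsol a_in
      by (intro scattering_coefficient_estimate[where lam = lamB, OF a(1,3) less_imp_le[OF h(1)]
            less_imp_le[OF k0] rho0 c lam C eigD[rule_format, OF a_in] bounded_droplet[OF B(2)]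
            _ _ _ _ _ m])
         (auto simp: q_def)
  qed
  then show ?thesis
    unfolding q_def
    by (intro bigoI eventually_at_rightI[of 0 "min a0 1"]) (use a0 in auto)
qed

end
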